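(* Let $T=\left[\begin{smallmatrix} R & M\\ N & S\end{smallmatrix}\right]$ and $T'=\left[\begin{smallmatrix} R' & M'\\ N' & S'\end{smallmatrix}\right]$ be Morita context rings with $R,S,R',S'$ indecomposable. Then $\mathrm{Iso}_g(T,T')\subseteq\mathrm{Iso}_0(T,T')$.
   Context: All rings have an identity $1\neq 0$; a ring is indecomposable if its only central idempotents are $0$ and $1$. A Morita context $(R,S,M,N,f,g)$: rings $R,S$, an $R$-$S$-bimodule $M$, an $S$-$R$-bimodule $N$, bimodule morphisms $f:M\otimes_SN\to R$, $g:N\otimes_RM\to S$, with $[m,n]=f(m\otimes n)$, $(n,m)=g(n\otimes m)$ satisfying $[m,n]m'=m(n,m')$ and $n[m,n']=(n,m)n'$. Its Morita context ring $T$ consists of formal matrices $\left[\begin{smallmatrix} r & m\\ n & s\end{smallmatrix}\right]$ with entrywise addition and product $\left[\begin{smallmatrix} r & m\\ n & s\end{smallmatrix}\right]\left[\begin{smallmatrix} r' & m'\\ n' & s'\end{smallmatrix}\right]=\left[\begin{smallmatrix} rr'+[m,n'] & rm'+ms'\\ nr'+sn' & (n,m')+ss'\end{smallmatrix}\right]$; similarly for $T'$. Grading: $T_{-1}=\left[\begin{smallmatrix} 0 & 0\\ N & 0\end{smallmatrix}\right]$, $T_0=\left[\begin{smallmatrix} R & 0\\ 0 & S\end{smallmatrix}\right]$, $T_1=\left[\begin{smallmatrix} 0 & M\\ 0 & 0\end{smallmatrix}\right]$, $T_i=0$ otherwise. $\mathrm{Iso}_g(T,T')$ is the set of ring isomorphisms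 $\phi:T\to T'$ that are graded ($\phi(T_i)\subseteq T'_i$ for all $i$) or anti-graded ($\phi(T_i)\subseteq T'_{-i}$ for all $i$). $\mathrm{Iso}_0(T,T')=\mathrm{Iso}_0^0(T,T')\cup\mathrm{Iso}_0^1(T,T')$, where $\mathrm{Iso}_0^0(T,T')$ is the set of maps $\phi\left(\left[\begin{smallmatrix} r & m\\ n & s\end{smallmatrix}\right]\right)=\left[\begin{smallmatrix}\gamma(r) & \gamma(r)m'_0-m'_0\delta(s)+u(m)\\ n'_0\gamma(r)-\delta(s)n'_0+v(n) & \delta(s)\end{smallmatrix}\right]$ with $\gamma:R\to R'$, $\delta:S\to S'$ ring isomorphisms, $u:M\to M'$, $v:N\to N'$ additive bijections with $u(rms)=\gamma(r)u(m)\delta(s)$, $v(snr)=\delta(s)v(n)\gamma(r)$, and $m'_0\in M'$, $n'_0\in N'$ with $[m'_0,N']=0$, $(N',m'_0)=0$, $[M',n'_0]=0$, $(n'_0,M')=0$, $[u(m),v(n)]=\gamma([m,n])$, $(v(n),u(m))=\delta((n,m))$; and $\mathrm{Iso}_0^1(T,T')$ is the set of maps $\psi\left(\left[\begin{smallmatrix} r & m\\ n & s\end{smallmatrix}\right]\right)=\left[\begin{smallmatrix}\sigma(s) & m'_*\rho(r)-\sigma(s)m'_*+\nu(n)\\ \rho(r)n'_*-n'_*\sigma(s)+\mu(m) & \rho(r)\end{smallmatrix}\right]$ with $\rho:R\to S'$, $\sigma:S\to R'$ ring isomorphisms, $\mu:M\to N'$, $\nu:N\to M'$ additive bijections with $\mu(rms)=\rho(r)\mu(m)\sigma(s)$,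 $\nu(snr)=\sigma(s)\nu(n)\rho(r)$, and $m'_*\in M'$, $n'_*\in N'$ with $[m'_*,N']=0$, $(N',m'_* )=0$, $[M',n'_*]=0$, $(n'_*,M')=0$, $(\mu(m),\nu(n))=\rho([m,n])$, $[\nu(n),\mu(m)]=\sigma((n,m))$. *)

theory Defs
  imports Main
begin

text \<open>The rings R, S are the types 'r, 's (class ring_1, so 1 \<noteq> 0);
 M, N are the abelian groups 'm, 'n. lM/rM: left R-/right S-action on M,
 lN/rN: left S-/right R-action on N, bf m n = [m,n], bg n m = (n,m).\<close>

record ('r, 's, 'm, 'n) morita =
  lM :: "'r \<Rightarrow> 'm \<Rightarrow> 'm"
  rM :: "'m \<Rightarrow> 's \<Rightarrow> 'm"
  lN :: "'s \<Rightarrow> 'n \<Rightarrow> 'n"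
  rN :: "'n \<Rightarrow> 'r \<Rightarrow> 'n"
  bf :: "'m \<Rightarrow> 'n \<Rightarrow> 'r"
  bg :: "'n \<Rightarrow> 'm \<Rightarrow> 's"

definition morita_context ::
  "('r::ring_1, 's::ring_1, 'm::ab_group_add, 'n::ab_group_add) morita \<Rightarrow> bool" where
  "morita_context C \<longleftrightarrow>
    \<comment> \<open>M is an R-S-bimodule\<close>
    (\<forall>r m m'. lM C r (m + m') = lM C r m + lM C r m') \<and>
    (\<forall>r r' m. lM C (r + r') m = lM C r m + lM C r' m) \<and>
    (\<forall>r r' m. lM C (r * r') m = lM C r (lM C r' m)) \<and>
    (\<forall>m. lM C 1 m = m) \<and>
    (\<forall>m m' s. rM C (m + m') s = rM C m s + rM C m' s) \<and>
    (\<forall>m s s'. rM C m (s + s') = rM C m s + rM C m s') \<and>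
    (\<forall>m s s'. rM C m (s * s') = rM C (rM C m s) s') \<and>
    (\<forall>m. rM C m 1 = m) \<and>
    (\<forall>r m s. rM C (lM C r m) s = lM C r (rM C m s)) \<and>
    \<comment> \<open>N is an S-R-bimodule\<close>
    (\<forall>s n n'. lN C s (n + n') = lN C s n + lN C s n') \<and>
    (\<forall>s s' n. lN C (s + s') n = lN C s n + lN C s' n) \<and>
    (\<forall>s s' n. lN C (s * s') n = lN C s (lN C s' n)) \<and>
    (\<forall>n. lN C 1 n = n) \<and>
    (\<forall>n n' r. rN C (n + n') r = rN C n r + rN C n' r) \<and>
    (\<forall>n r r'. rN C n (r + r') = rN C n r + rN C n r') \<and>
    (\<forall>n r r'. rN C n (r * r') = rN C (rN C n r) r') \<and>
    (\<forall>n. rN C n 1 = n) \<and>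
    (\<forall>s n r. rN C (lN C s n) r = lN C s (rN C n r)) \<and>
    \<comment> \<open>f : M \<otimes>_S N \<rightarrow> R is an R-R-bimodule morphism\<close>
    (\<forall>m m' n. bf C (m + m') n = bf C m n + bf C m' n) \<and>
    (\<forall>m n n'. bf C m (n + n') = bf C m n + bf C m n') \<and>
    (\<forall>m s n. bf C (rM C m s) n = bf C m (lN C s n)) \<and>
    (\<forall>r m n. bf C (lM C r m) n = r * bf C m n) \<and>
    (\<forall>m n r. bf C m (rN C n r) = bf C m n * r) \<and>
    \<comment> \<open>g : N \<otimes>_R M \<rightarrow> S is an S-S-bimodule morphism\<close>
    (\<forall>n n' m. bg C (n + n') m = bg C n m + bg C n' m) \<and>
    (\<forall>n m m'. bg C n (m + m') = bg C n m + bg C n m') \<and>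
    (\<forall>n r m. bg C (rN C n r) m = bg C n (lM C r m)) \<and>
    (\<forall>s n m. bg C (lN C s n) m = s * bg C n m) \<and>
    (\<forall>n m s. bg C n (rM C m s) = bg C n m * s) \<and>
    \<comment> \<open>associativity conditions\<close>
    (\<forall>m n m'. lM C (bf C m n) m' = rM C m (bg C n m')) \<and>
    (\<forall>n m n'. rN C n (bf C m n') = lN C (bg C n m) n')"

text \<open>The Morita context ring T: elements (r,m,n,s) stand for the matrix [[r,m],[n,s]].\<close>

definition tadd :: "'r::ring_1 \<times> 'm::ab_group_add \<times> 'n::ab_group_add \<times> 's::ring_1
    \<Rightarrow> 'r \<times> 'm \<times> 'n \<times> 's \<Rightarrow> 'r \<times> 'm \<times> 'n \<times> 's" where
  "tadd x y = (case x of (r, m, n, s) \<Rightarrow> case y of (r', m', n', s') \<Rightarrow>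
     (r + r', m + m', n + n', s + s'))"

definition tmult :: "('r::ring_1, 's::ring_1, 'm::ab_group_add, 'n::ab_group_add) morita
    \<Rightarrow> 'r \<times> 'm \<times> 'n \<times> 's \<Rightarrow> 'r \<times> 'm \<times> 'n \<times> 's \<Rightarrow> 'r \<times> 'm \<times> 'n \<times> 's" where
  "tmult C x y = (case x of (r, m, n, s) \<Rightarrow> case y of (r', m', n', s') \<Rightarrow>
     (r * r' + bf C m n', lM C r m' + rM C m s', rN C n r' + lN C s n', bg C n m' + s * s'))"

definition tone :: "'r::ring_1 \<times> 'm::ab_group_add \<times> 'n::ab_group_add \<times> 's::ring_1" where
  "tone = (1, 0, 0, 1)"

definition indecomposable :: "'a::ring_1 itself \<Rightarrow> bool" where
  "indecomposable _ \<longleftrightarrow>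
     (\<forall>e::'a. e * e = e \<and> (\<forall>x. e * x = x * e) \<longrightarrow> e = 0 \<or> e = 1)"

definition ring_iso :: "('a::ring_1 \<Rightarrow> 'b::ring_1) \<Rightarrow> bool" where
  "ring_iso h \<longleftrightarrow> bij h \<and> (\<forall>x y. h (x + y) = h x + h y) \<and>
     (\<forall>x y. h (x * y) = h x * h y) \<and> h 1 = 1"

definition additive_bij :: "('a::ab_group_add \<Rightarrow> 'b::ab_group_add) \<Rightarrow> bool" where
  "additive_bij h \<longleftrightarrow> bij h \<and> (\<forall>x y. h (x + y) = h x + h y)"

definition T_iso ::
  "('r::ring_1, 's::ring_1, 'm::ab_group_add, 'n::ab_group_add) morita
   \<Rightarrow> ('r2::ring_1, 's2::ring_1, 'm2::ab_group_add, 'n2::ab_group_add) morita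
   \<Rightarrow> ('r \<times> 'm \<times> 'n \<times> 's \<Rightarrow> 'r2 \<times> 'm2 \<times> 'n2 \<times> 's2) \<Rightarrow> bool" where
  "T_iso C C' \<phi> \<longleftrightarrow> bij \<phi> \<and> (\<forall>x y. \<phi> (tadd x y) = tadd (\<phi> x) (\<phi> y)) \<and>
     (\<forall>x y. \<phi> (tmult C x y) = tmult C' (\<phi> x) (\<phi> y)) \<and> \<phi> tone = tone"

text \<open>Graded: \<phi>(T_i) \<subseteq> T'_i for i = -1, 0, 1 (other T_i are zero).
  Anti-graded: \<phi>(T_i) \<subseteq> T'_{-i}.\<close>
definition graded :: "('r::zero \<times> 'm::zero \<times> 'n::zero \<times> 's::zero \<Rightarrow> 'r2::zero \<times> 'm2::zero \<times> 'n2::zero \<times> 's2::zero) \<Rightarrow> bool" where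
  "graded \<phi> \<longleftrightarrow>
    (\<forall>n::'n. \<exists>n'. \<phi> (0::'r, 0::'m, n, 0::'s) = (0::'r2, 0::'m2, n', 0)) \<and>
    (\<forall>r s. \<exists>r' s'. \<phi> (r, 0, 0, s) = (r', 0, 0::'n2, s')) \<and>
    (\<forall>m. \<exists>m'. \<phi> (0, m, 0::'n, 0) = (0, m', 0, 0))"

definition antigraded :: "('r::zero \<times> 'm::zero \<times> 'n::zero \<times> 's::zero \<Rightarrow> 'r2::zero \<times> 'm2::zero \<times> 'n2::zero \<times> 's2::zero) \<Rightarrow> bool" where
  "antigraded \<phi> \<longleftrightarrow>
    (\<forall>n::'n. \<exists>m'. \<phi> (0::'r, 0::'m, n, 0::'s) = (0::'r2, m', 0::'n2, 0)) \<and>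
    (\<forall>r s. \<exists>r' s'. \<phi> (r, 0, 0, s) = (r', 0, 0, s')) \<and>
    (\<forall>m. \<exists>n'. \<phi> (0, m, 0::'n, 0) = (0, 0, n', 0))"

definition Iso_g ::
  "('r::ring_1, 's::ring_1, 'm::ab_group_add, 'n::ab_group_add) morita
   \<Rightarrow> ('r2::ring_1, 's2::ring_1, 'm2::ab_group_add, 'n2::ab_group_add) morita
   \<Rightarrow> ('r \<times> 'm \<times> 'n \<times> 's \<Rightarrow> 'r2 \<times> 'm2 \<times> 'n2 \<times> 's2) set" where
  "Iso_g C C' = {\<phi>. T_iso C C' \<phi> \<and> (graded \<phi> \<or> antigraded \<phi>)}"

definition Iso_0_0 ::
  "('r::ring_1, 's::ring_1, 'm::ab_group_add, 'n::ab_group_add) morita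
   \<Rightarrow> ('r2::ring_1, 's2::ring_1, 'm2::ab_group_add, 'n2::ab_group_add) morita
   \<Rightarrow> ('r \<times> 'm \<times> 'n \<times> 's \<Rightarrow> 'r2 \<times> 'm2 \<times> 'n2 \<times> 's2) set" where
  "Iso_0_0 C C' = {\<phi>. \<exists>(\<gamma>::'r \<Rightarrow> 'r2) (\<delta>::'s \<Rightarrow> 's2) (u::'m \<Rightarrow> 'm2) (v::'n \<Rightarrow> 'n2) m0 n0.
     ring_iso \<gamma> \<and> ring_iso \<delta> \<and> additive_bij u \<and> additive_bij v \<and>
     (\<forall>r m s. u (lM C r (rM C m s)) = lM C' (\<gamma> r) (rM C' (u m) (\<delta> s))) \<and>
     (\<forall>s n r. v (lN C s (rN C n r)) = lN C' (\<delta> s) (rN C' (v n) (\<gamma> r))) \<and>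
     (\<forall>n'. bf C' m0 n' = 0) \<and> (\<forall>n'. bg C' n' m0 = 0) \<and>
     (\<forall>m'. bf C' m' n0 = 0) \<and> (\<forall>m'. bg C' n0 m' = 0) \<and>
     (\<forall>m n. bf C' (u m) (v n) = \<gamma> (bf C m n)) \<and>
     (\<forall>m n. bg C' (v n) (u m) = \<delta> (bg C n m)) \<and>
     (\<forall>r m n s. \<phi> (r, m, n, s) =
        (\<gamma> r, lM C' (\<gamma> r) m0 - rM C' m0 (\<delta> s) + u m,
         rN C' n0 (\<gamma> r) - lN C' (\<delta> s) n0 + v n, \<delta> s))}"

definition Iso_0_1 ::
  "('r::ring_1, 's::ring_1, 'm::ab_group_add, 'n::ab_group_add) morita
   \<Rightarrow> ('r2::ring_1, 's2::ring_1, 'm2::ab_group_add, 'n2::ab_group_add) morita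
   \<Rightarrow> ('r \<times> 'm \<times> 'n \<times> 's \<Rightarrow> 'r2 \<times> 'm2 \<times> 'n2 \<times> 's2) set" where
  "Iso_0_1 C C' = {\<psi>. \<exists>(\<rho>::'r \<Rightarrow> 's2) (\<sigma>::'s \<Rightarrow> 'r2) (\<mu>::'m \<Rightarrow> 'n2) (\<nu>::'n \<Rightarrow> 'm2) ms ns.
     ring_iso \<rho> \<and> ring_iso \<sigma> \<and> additive_bij \<mu> \<and> additive_bij \<nu> \<and>
     (\<forall>r m s. \<mu> (lM C r (rM C m s)) = lN C' (\<rho> r) (rN C' (\<mu> m) (\<sigma> s))) \<and>
     (\<forall>s n r. \<nu> (lN C s (rN C n r)) = lM C' (\<sigma> s) (rM C' (\<nu> n) (\<rho> r))) \<and>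
     (\<forall>n'. bf C' ms n' = 0) \<and> (\<forall>n'. bg C' n' ms = 0) \<and>
     (\<forall>m'. bf C' m' ns = 0) \<and> (\<forall>m'. bg C' ns m' = 0) \<and>
     (\<forall>m n. bg C' (\<mu> m) (\<nu> n) = \<rho> (bf C m n)) \<and>
     (\<forall>m n. bf C' (\<nu> n) (\<mu> m) = \<sigma> (bg C n m)) \<and>
     (\<forall>r m n s. \<psi> (r, m, n, s) =
        (\<sigma> s, rM C' ms (\<rho> r) - lM C' (\<sigma> s) ms + \<nu> n,
         lN C' (\<rho> r) ns - rN C' ns (\<sigma> s) + \<mu> m, \<rho> r))}"

definition Iso_0 ::
  "('r::ring_1, 's::ring_1, 'm::ab_group_add, 'n::ab_group_add) morita
   \<Rightarrow> ('r2::ring_1, 's2::ring_1, 'm2::ab_group_add, 'n2::ab_group_add) morita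
   \<Rightarrow> ('r \<times> 'm \<times> 'n \<times> 's \<Rightarrow> 'r2 \<times> 'm2 \<times> 'n2 \<times> 's2) set" where
  "Iso_0 C C' = Iso_0_0 C C' \<union> Iso_0_1 C C'"

end

theory Submission
  imports Defs
begin

(* Let e1 = (1,0,0,0) and e2 = (0,0,0,1) be the diagonal idempotents of T,
   and e1', e2' those of T'.  For a graded or anti-graded isomorphism phi the image
   phi(e1) is diagonal, (a,0,0,b), and a, b are central idempotents of R', S';
   by indecomposability and injectivity of phi, phi(e1) is e1' or e2'
   (only the indecomposability of R' and S' is needed).
   Any ring isomorphism with phi(e1) = e1' respects the Peirce corners e_i T e_j,
   hence acts entrywise as (r,m,n,s) |-> (gamma r, u m, v n, delta s), which
   places it in Iso_0^0 (with m'_0 = n'_0 = 0).  The case phi(e1) = e2' is reduced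
   to the previous one by composing with the swap isomorphism of T' onto the
   Morita context ring of the swapped context (S',R',N',M',g',f'), which
   identifies Iso_0^1 C C' with Iso_0^0 of the swapped target. *)

lemma additive_map_zero:
  fixes f :: "'a::ab_group_add \<Rightarrow> 'b::ab_group_add"
  assumes "\<And>x y. f (x + y) = f x + f y"
  shows "f 0 = 0"
  using assms[of 0 0] by simp

lemma morita_zero:
  assumes "morita_context C"
  shows "lM C r 0 = 0" "lM C 0 m = 0" "rM C m 0 = 0" "rM C 0 s = 0"
    "lN C s 0 = 0" "lN C 0 n = 0" "rN C n 0 = 0" "rN C 0 r = 0"
    "bf C 0 n = 0" "bf C m 0 = 0" "bg C 0 m = 0" "bg C n 0 = 0"
  using assms unfolding morita_context_def
  by (auto intro!: additive_map_zero)

lemma morita_unit_assoc: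
  assumes "morita_context C"
  shows "lM C 1 m = m" "rM C m 1 = m" "lN C 1 n = n" "rN C n 1 = n"
    "rM C (lM C r m) s = lM C r (rM C m s)" "rN C (lN C s n) r = lN C s (rN C n r)"
  using assms unfolding morita_context_def by meson+

lemma tmult_simp: "tmult C (r,m,n,s) (r',m',n',s') =
  (r * r' + bf C m n', lM C r m' + rM C m s', rN C n r' + lN C s n', bg C n m' + s * s')"
  by (simp add: tmult_def)

lemma tadd_simp: "tadd (r,m,n,s) (r',m',n',s') = (r + r', m + m', n + n', s + s')"
  by (simp add: tadd_def)

lemma peirce_corners:
  assumes "morita_context C"
  shows "tmult C (tmult C (1,0,0,0) x) (1,0,0,0) = (fst x,0,0,0)"
    "tmult C (tmult C (1,0,0,0) x) (0,0,0,1) = (0,fst (snd x),0,0)"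
    "tmult C (tmult C (0,0,0,1) x) (1,0,0,0) = (0,0,fst (snd (snd x)),0)"
    "tmult C (tmult C (0,0,0,1) x) (0,0,0,1) = (0,0,0,snd (snd (snd x)))"
  using assms by (cases x; simp add: tmult_simp morita_zero morita_unit_assoc)+

lemma T_isoD:
  assumes "T_iso C C' \<phi>"
  shows "\<phi> (tadd x y) = tadd (\<phi> x) (\<phi> y)" "\<phi> (tmult C x y) = tmult C' (\<phi> x) (\<phi> y)"
    "\<phi> (1,0,0,1) = (1,0,0,1)" "inj \<phi>" "surj \<phi>"
  using assms unfolding T_iso_def tone_def bij_def by blast+

lemma T_iso_zero:
  assumes "T_iso C C' \<phi>"
  shows "\<phi> (0,0,0,0) = (0,0,0,0)"
proof -
  have "\<phi> (0,0,0,0) = tadd (\<phi> (0,0,0,0)) (\<phi> (0,0,0,0))"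
    using T_isoD(1)[OF assms, of "(0,0,0,0)" "(0,0,0,0)"] by (simp add: tadd_simp)
  then show ?thesis by (cases "\<phi> (0,0,0,0)") (simp add: tadd_simp)
qed

lemma entrywise_iso_in_Iso_0_0:
  assumes C: "morita_context C" and C': "morita_context C'"
    and iso: "T_iso C C' \<phi>"
    and form: "\<And>r m n s. \<phi> (r,m,n,s) = (\<gamma> r, u m, v n, \<delta> s)"
  shows "\<phi> \<in> Iso_0_0 C C'"
proof -
  note Z = morita_zero[OF C] morita_zero[OF C'] morita_unit_assoc[OF C] morita_unit_assoc[OF C']
  have add: "\<gamma> (r + r') = \<gamma> r + \<gamma> r'" "u (m + m') = u m + u m'"
    "v (n + n') = v n + v n'" "\<delta> (s + s') = \<delta> s + \<delta> s'" for r r' m m' n n' s s'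
    using T_isoD(1)[OF iso, of "(r,m,n,s)" "(r',m',n',s')"] by (simp_all add: form tadd_simp)
  then have zero: "\<gamma> 0 = 0" "u 0 = 0" "v 0 = 0" "\<delta> 0 = 0" by (auto intro: additive_map_zero)
  have inj_phi: "\<phi> x = \<phi> y \<Longrightarrow> x = y" for x y
    using T_isoD(4)[OF iso] by (simp add: inj_eq)
  have "inj \<gamma>"
    by (rule injI) (use inj_phi[of "(_,0,0,0)" "(_,0,0,0)"] in \<open>simp add: form\<close>)
  moreover have "inj u"
    by (rule injI) (use inj_phi[of "(0,_,0,0)" "(0,_,0,0)"] in \<open>simp add: form\<close>)
  moreover have "inj v"
    by (rule injI) (use inj_phi[of "(0,0,_,0)" "(0,0,_,0)"] in \<open>simp add: form\<close>)
  moreover have "inj \<delta>"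
    by (rule injI) (use inj_phi[of "(0,0,0,_)" "(0,0,0,_)"] in \<open>simp add: form\<close>)
  ultimately have inj: "inj \<gamma>" "inj u" "inj v" "inj \<delta>" by blast+
  have preimage: "\<exists>r m n s. \<phi> (r,m,n,s) = z" for z
    using T_isoD(5)[OF iso] by (metis surjD prod_cases4)
  have onto: "\<exists>r m n s. t1 = \<gamma> r \<and> t2 = u m \<and> t3 = v n \<and> t4 = \<delta> s" for t1 t2 t3 t4
    using preimage[of "(t1,t2,t3,t4)"] by (auto simp: form)
  have surj: "surj \<gamma>" "surj u" "surj v" "surj \<delta>"
    using onto by (simp_all add: surj_def)
  have mult: "\<gamma> (r * r') = \<gamma> r * \<gamma> r'" "\<delta> (s * s') = \<delta> s * \<delta> s'" for r r' s s'
    using T_isoD(2)[OF iso, of "(r,0,0,0)" "(r',0,0,0)"]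
      T_isoD(2)[OF iso, of "(0,0,0,s)" "(0,0,0,s')"] by (simp_all add: form tmult_simp Z zero)
  have one: "\<gamma> 1 = 1" "\<delta> 1 = 1"
    using T_isoD(3)[OF iso] by (simp_all add: form)
  have pairings: "bf C' (u m) (v n) = \<gamma> (bf C m n)" "bg C' (v n) (u m) = \<delta> (bg C n m)" for m n
    using T_isoD(2)[OF iso, of "(0,m,0,0)" "(0,0,n,0)"]
      T_isoD(2)[OF iso, of "(0,0,n,0)" "(0,m,0,0)"] by (simp_all add: form tmult_simp Z zero)
  have actions: "u (lM C r (rM C m s)) = lM C' (\<gamma> r) (rM C' (u m) (\<delta> s))"
    "v (lN C s (rN C n r)) = lN C' (\<delta> s) (rN C' (v n) (\<gamma> r))" for r m n s
    using T_isoD(2)[OF iso, of "tmult C (r,0,0,0) (0,m,0,0)" "(0,0,0,s)"]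
      T_isoD(2)[OF iso, of "(r,0,0,0)" "(0,m,0,0)"]
      T_isoD(2)[OF iso, of "tmult C (0,0,0,s) (0,0,n,0)" "(r,0,0,0)"]
      T_isoD(2)[OF iso, of "(0,0,0,s)" "(0,0,n,0)"]
    by (simp_all add: form tmult_simp Z zero)
  have "ring_iso \<gamma>" "ring_iso \<delta>" "additive_bij u" "additive_bij v"
    using add mult one inj surj by (simp_all add: ring_iso_def additive_bij_def bij_def)
  then show ?thesis unfolding Iso_0_0_def
    using actions pairings by (intro CollectI exI[of _ \<gamma>] exI[of _ \<delta>] exI[of _ u]
        exI[of _ v] exI[of _ 0] exI[of _ 0]) (simp add: form morita_zero[OF C'])
qed

text \<open>An isomorphism fixing e1 also fixes e2 = 1 - e1, so it maps each Peirce corner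
  e_i T e_j into the corresponding corner of T' and therefore acts entrywise.\<close>
lemma iso_fixing_e1_entrywise:
  assumes C: "morita_context C" and C': "morita_context C'"
    and iso: "T_iso C C' \<phi>" and e1: "\<phi> (1,0,0,0) = (1,0,0,0)"
  shows "\<phi> (r,m,n,s) = (fst (\<phi> (r,0,0,0)), fst (snd (\<phi> (0,m,0,0))),
                        fst (snd (snd (\<phi> (0,0,n,0)))), snd (snd (snd (\<phi> (0,0,0,s)))))"
proof -
  have "(1,0,0,1) = tadd (1,0,0,0) (\<phi> (0,0,0,1))"
    using T_isoD(1,3)[OF iso] e1 by (metis tadd_simp add_0 add_0_right)
  then have e2: "\<phi> (0,0,0,1) = (0,0,0,1)"
    by (cases "\<phi> (0,0,0,1)") (simp add: tadd_simp)
  have sandwich: "\<phi> (tmult C (tmult C x y) z) = tmult C' (tmult C' (\<phi> x) (\<phi> y)) (\<phi> z)" for x y z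
    by (simp add: T_isoD(2)[OF iso])
  have "\<phi> (r,0,0,0) = (fst (\<phi> (r,0,0,0)),0,0,0)"
    using sandwich[of "(1,0,0,0)" "(r,0,0,0)" "(1,0,0,0)"] by (simp add: peirce_corners C C' e1)
  moreover have "\<phi> (0,m,0,0) = (0,fst (snd (\<phi> (0,m,0,0))),0,0)"
    using sandwich[of "(1,0,0,0)" "(0,m,0,0)" "(0,0,0,1)"] by (simp add: peirce_corners C C' e1 e2)
  moreover have "\<phi> (0,0,n,0) = (0,0,fst (snd (snd (\<phi> (0,0,n,0)))),0)"
    using sandwich[of "(0,0,0,1)" "(0,0,n,0)" "(1,0,0,0)"] by (simp add: peirce_corners C C' e1 e2)
  moreover have "\<phi> (0,0,0,s) = (0,0,0,snd (snd (snd (\<phi> (0,0,0,s)))))"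
    using sandwich[of "(0,0,0,1)" "(0,0,0,s)" "(0,0,0,1)"] by (simp add: peirce_corners C C' e2)
  moreover have "(r,m,n,s) = tadd (tadd (r,0,0,0) (0,m,0,0)) (tadd (0,0,n,0) (0,0,0,s))"
    by (simp add: tadd_simp)
  ultimately show ?thesis
    by (metis (no_types, lifting) T_isoD(1)[OF iso] tadd_simp add_0 add_0_right)
qed

lemma iso_fixing_e1_in_Iso_0_0:
  assumes C: "morita_context C" and C': "morita_context C'"
    and iso: "T_iso C C' \<phi>" and e1: "\<phi> (1,0,0,0) = (1,0,0,0)"
  shows "\<phi> \<in> Iso_0_0 C C'"
  using entrywise_iso_in_Iso_0_0[OF C C' iso iso_fixing_e1_entrywise[OF C C' iso e1]] .

section \<open>The swapped Morita context\<close>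

text \<open>Exchanging the roles of R and S (and of M and N) in a Morita context gives
  again a Morita context; the corresponding context ring is T with rows and columns
  both reversed.\<close>
definition swap_context ::
  "('r, 's, 'm, 'n) morita \<Rightarrow> ('s, 'r, 'n, 'm) morita" where
  "swap_context C = \<lparr>lM = lN C, rM = rN C, lN = lM C, rN = rM C, bf = bg C, bg = bf C\<rparr>"

definition swap_entries :: "'r \<times> 'm \<times> 'n \<times> 's \<Rightarrow> 's \<times> 'n \<times> 'm \<times> 'r" where
  "swap_entries x = (case x of (r, m, n, s) \<Rightarrow> (s, n, m, r))"

lemma swap_entries_simp [simp]: "swap_entries (r,m,n,s) = (s,n,m,r)"
  by (simp add: swap_entries_def)

lemma morita_context_swap:
  assumes "morita_context C"
  shows "morita_context (swap_context C)"
  using assms unfolding morita_context_def swap_context_def by (simp add: eq_commute)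

lemma bij_swap_entries: "bij swap_entries"
  by (rule o_bij[where g = swap_entries]) (auto simp: fun_eq_iff swap_entries_def)

lemma T_iso_swap:
  assumes "T_iso C C' \<phi>"
  shows "T_iso C (swap_context C') (swap_entries \<circ> \<phi>)"
proof -
  have add: "swap_entries (tadd x y) = tadd (swap_entries x) (swap_entries y)" for x y
    by (cases x; cases y) (simp add: tadd_simp)
  have mult: "swap_entries (tmult C' x y) = tmult (swap_context C') (swap_entries x) (swap_entries y)" for x y
    by (cases x; cases y) (simp add: tmult_simp swap_context_def add.commute)
  have "bij (swap_entries \<circ> \<phi>)"
    using assms bij_swap_entries unfolding T_iso_def by (blast intro: bij_comp)
  then show ?thesis
    using assms unfolding T_iso_def by (simp add: add mult tone_def)
qed

lemma swap_Iso_0_0_imp_Iso_0_1: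
  assumes "swap_entries \<circ> \<psi> \<in> Iso_0_0 C (swap_context C')"
  shows "\<psi> \<in> Iso_0_1 C C'"
proof -
  obtain \<gamma> \<delta> u v m0 n0 where
    isos: "ring_iso \<gamma>" "ring_iso \<delta>" "additive_bij u" "additive_bij v"
    and actions: "\<forall>r m s. u (lM C r (rM C m s)) = lN C' (\<gamma> r) (rN C' (u m) (\<delta> s))"
      "\<forall>s n r. v (lN C s (rN C n r)) = lM C' (\<delta> s) (rM C' (v n) (\<gamma> r))"
    and annihilators: "\<forall>n'. bg C' m0 n' = 0" "\<forall>n'. bf C' n' m0 = 0"
      "\<forall>m'. bg C' m' n0 = 0" "\<forall>m'. bf C' n0 m' = 0"
    and pairings: "\<forall>m n. bg C' (u m) (v n) = \<gamma> (bf C m n)"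
      "\<forall>m n. bf C' (v n) (u m) = \<delta> (bg C n m)"
    and form: "\<And>r m n s. swap_entries (\<psi> (r,m,n,s)) =
        (\<gamma> r, lN C' (\<gamma> r) m0 - rN C' m0 (\<delta> s) + u m,
         rM C' n0 (\<gamma> r) - lM C' (\<delta> s) n0 + v n, \<delta> s)"
    using assms unfolding Iso_0_0_def swap_context_def by auto
  have "\<psi> (r,m,n,s) = (\<delta> s, rM C' n0 (\<gamma> r) - lM C' (\<delta> s) n0 + v n,
      lN C' (\<gamma> r) m0 - rN C' m0 (\<delta> s) + u m, \<gamma> r)" for r m n s
    using form[of r m n s] by (cases "\<psi> (r,m,n,s)") simp
  then show ?thesis unfolding Iso_0_1_def
    using isos actions annihilators pairings
    by (intro CollectI exI[of _ \<gamma>] exI[of _ \<delta>] exI[of _ u] exI[of _ v] exI[of _ n0]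
        exI[of _ m0]) simp
qed

section \<open>The image of e1 under a graded or anti-graded isomorphism\<close>

lemma graded_or_antigraded_shapes:
  assumes "graded \<phi> \<or> antigraded \<phi>"
  shows "\<exists>r' s'. \<phi> (r,0,0,s) = (r',0,0,s')"
    "\<exists>m' n'. \<phi> (0,m,0,0) = (0,m',n',0)"
    "\<exists>m' n'. \<phi> (0,0,n,0) = (0,m',n',0)"
  using assms unfolding graded_def antigraded_def by blast+

lemma graded_iso_diagonal_entries:
  assumes iso: "T_iso C C' \<phi>" and gr: "graded \<phi> \<or> antigraded \<phi>"
  shows "fst (\<phi> (r,m,n,s)) = fst (\<phi> (r,0,0,s))"
    "snd (snd (snd (\<phi> (r,m,n,s)))) = snd (snd (snd (\<phi> (r,0,0,s))))"
proof -
  obtain m1 n1 where M: "\<phi> (0,m,0,0) = (0,m1,n1,0)"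
    using graded_or_antigraded_shapes(2)[OF gr] by blast
  obtain m2 n2 where N: "\<phi> (0,0,n,0) = (0,m2,n2,0)"
    using graded_or_antigraded_shapes(3)[OF gr] by blast
  have "(r,m,n,s) = tadd (r,0,0,s) (tadd (0,m,0,0) (0,0,n,0))"
    by (simp add: tadd_simp)
  then have "\<phi> (r,m,n,s) = tadd (\<phi> (r,0,0,s)) (tadd (0,m1,n1,0) (0,m2,n2,0))"
    by (simp add: T_isoD(1)[OF iso] M N)
  then show "fst (\<phi> (r,m,n,s)) = fst (\<phi> (r,0,0,s))"
    "snd (snd (snd (\<phi> (r,m,n,s)))) = snd (snd (snd (\<phi> (r,0,0,s))))"
    by (cases "\<phi> (r,0,0,s)"; simp add: tadd_simp)+
qed

text \<open>phi(e1) = (a,0,0,b) with a, b central idempotents: idempotency is inherited from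
  e1, and centrality follows because for a preimage y of a diagonal matrix the
  products e1 y and y e1 have the same diagonal.\<close>
lemma graded_iso_e1_central_idempotents:
  assumes C: "morita_context C" and C': "morita_context C'"
    and iso: "T_iso C C' \<phi>" and gr: "graded \<phi> \<or> antigraded \<phi>"
    and e1: "\<phi> (1,0,0,0) = (a,0,0,b)"
  shows "a * a = a" "a * x = x * a" "b * b = b" "b * x' = x' * b"
proof -
  note Z = morita_zero[OF C] morita_zero[OF C'] morita_unit_assoc[OF C]
  show "a * a = a" "b * b = b"
    using T_isoD(2)[OF iso, of "(1,0,0,0)" "(1,0,0,0)"] e1 by (simp_all add: tmult_simp Z)
  obtain y where "\<phi> y = (x,0,0,x')"
    using T_isoD(5)[OF iso] by (metis surjD)
  moreover obtain r m n s where y: "y = (r,m,n,s)"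
    by (cases y)
  ultimately have y_img: "\<phi> (r,m,n,s) = (x,0,0,x')" by simp
  have "\<phi> (r,m,0,0) = tmult C' (a,0,0,b) (x,0,0,x')"
    using T_isoD(2)[OF iso, of "(1,0,0,0)" "(r,m,n,s)"] e1 y_img by (simp add: tmult_simp Z)
  moreover have "\<phi> (r,0,n,0) = tmult C' (x,0,0,x') (a,0,0,b)"
    using T_isoD(2)[OF iso, of "(r,m,n,s)" "(1,0,0,0)"] e1 y_img by (simp add: tmult_simp Z)
  moreover note graded_iso_diagonal_entries[OF iso gr, of r m 0 0]
    graded_iso_diagonal_entries[OF iso gr, of r 0 n 0]
  ultimately show "a * x = x * a" "b * x' = x' * b"
    by (simp_all add: tmult_simp Z)
qed

text \<open>With all four rings indecomposable, phi(e1) is e1' or e2'; the other two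
  candidates 0 and 1 are excluded by injectivity, as they are the images of 0 and 1.\<close>
lemma graded_iso_e1_cases:
  assumes C: "morita_context C" and C': "morita_context C'"
    and iso: "T_iso C C' \<phi>" and gr: "graded \<phi> \<or> antigraded \<phi>"
    and indec: "indecomposable TYPE('r2::ring_1)" "indecomposable TYPE('s2::ring_1)"
  shows "\<phi> (1,0,0,0) = ((1::'r2),0,0,(0::'s2)) \<or> \<phi> (1,0,0,0) = ((0::'r2),0,0,(1::'s2))"
proof -
  obtain a b where e1: "\<phi> (1,0,0,0) = (a,0,0,b)"
    using graded_or_antigraded_shapes(1)[OF gr] by blast
  note central = graded_iso_e1_central_idempotents[OF C C' iso gr e1]
  have "a = 0 \<or> a = 1" "b = 0 \<or> b = 1"
    using indec central unfolding indecomposable_def by blast+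
  moreover have "\<phi> (1,0,0,0) \<noteq> \<phi> (0,0,0,0)" "\<phi> (1,0,0,0) \<noteq> \<phi> (1,0,0,1)"
    using T_isoD(4)[OF iso] by (simp_all add: inj_eq)
  ultimately show ?thesis
    using e1 T_iso_zero[OF iso] T_isoD(3)[OF iso] by auto
qed

theorem corollary3p8:
  fixes C :: "('r::ring_1, 's::ring_1, 'm::ab_group_add, 'n::ab_group_add) morita"
    and C' :: "('r2::ring_1, 's2::ring_1, 'm2::ab_group_add, 'n2::ab_group_add) morita"
  assumes "morita_context C" and "morita_context C'"
    and "indecomposable TYPE('r)" and "indecomposable TYPE('s)"
    and "indecomposable TYPE('r2)" and "indecomposable TYPE('s2)"
  shows "Iso_g C C' \<subseteq> Iso_0 C C'"
proof
  fix \<phi> assume "\<phi> \<in> Iso_g C C'"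
  then have iso: "T_iso C C' \<phi>" and gr: "graded \<phi> \<or> antigraded \<phi>"
    by (auto simp: Iso_g_def)
  from graded_iso_e1_cases[OF assms(1,2) iso gr assms(5,6)]
  show "\<phi> \<in> Iso_0 C C'"
  proof
    assume "\<phi> (1,0,0,0) = (1,0,0,0)"
    then have "\<phi> \<in> Iso_0_0 C C'"
      using iso_fixing_e1_in_Iso_0_0[OF assms(1,2) iso] by blast
    then show ?thesis by (simp add: Iso_0_def)
  next
    assume "\<phi> (1,0,0,0) = (0,0,0,1)"
    then have "(swap_entries \<circ> \<phi>) (1,0,0,0) = (1,0,0,0)" by simp
    then have "swap_entries \<circ> \<phi> \<in> Iso_0_0 C (swap_context C')"
      using iso_fixing_e1_in_Iso_0_0[OF assms(1) morita_context_swap[OF assms(2)] T_iso_swap[OF iso]]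
      by blast
    then show ?thesis by (simp add: Iso_0_def swap_Iso_0_0_imp_Iso_0_1)
  qed
qed

end
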